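(* For all $1\leq r<s\leq n$, $$x_r^{-1}\sum_{T\in \mathcal P_{n}^{(r)}}t^{\mathrm{eld}(T)}\prod_{i=1}^{n}x_i^{\mathrm{young}_T(i)}=x_s^{-1}\sum_{T\in \mathcal P_{n}^{(s)}}t^{\mathrm{eld}(T)}\prod_{i=1}^{n}x_i^{\mathrm{young}_T(i)}.$$
   Context: All trees are rooted trees whose vertices are labeled by distinct positive integers. A vertex $j$ is a descendant of $i$ if the path from the root to $j$ passes through $i$ (every vertex is a descendant of itself); $\beta_T(i)$ is the smallest descendant of $i$. A child of $i$ is a descendant joined to $i$ by an edge; children of the same vertex are brothers. A plane tree is a rooted tree in which the children of each vertex are linearly ordered (left to right). In a plane tree $T$, a vertex $j$ is elder if it has a brother $k$ to its right with $\beta_T(k)<\beta_T(j)$. $\mathrm{eld}_T(v)$ is the number of elder children of $v$, $\mathrm{eld}(T)$ the total number of elder vertices, $\deg_T(v)$ the number of children of $v$, and $\mathrm{young}_T(v)=\deg_T(v)-\mathrm{eld}_T(v)$. $\mathcal P_n^{(r)}$ is the set of plane trees on $[n]=\{1,\dots,n\}$ with root $r$. The identity is in the field of rational functions in $x_1,\dots,x_n,t$. *)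

theory Defs
  imports Main
begin

text \<open>A plane tree on vertex set [n] = {1..n} is encoded by its children-list map
  ch :: nat => nat list: ch v is the left-to-right list of children of v
  (empty for leaves and for labels outside [n]).\<close>

definition child_rel :: "(nat \<Rightarrow> nat list) \<Rightarrow> (nat \<times> nat) set" where
  "child_rel ch = {(v, c). c \<in> set (ch v)}"

definition is_plane_tree :: "nat \<Rightarrow> nat \<Rightarrow> (nat \<Rightarrow> nat list) \<Rightarrow> bool" where
  "is_plane_tree n r ch \<longleftrightarrow>
     r \<in> {1..n} \<and>
     (\<forall>v. v \<notin> {1..n} \<longrightarrow> ch v = []) \<and>
     (\<forall>v. distinct (ch v) \<and> set (ch v) \<subseteq> {1..n}) \<and>
     (\<forall>v. r \<notin> set (ch v)) \<and>
     (\<forall>c\<in>{1..n} - {r}. \<exists>!v. c \<in> set (ch v)) \<and>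
     (\<forall>v\<in>{1..n}. (r, v) \<in> (child_rel ch)\<^sup>*)"

definition plane_trees :: "nat \<Rightarrow> nat \<Rightarrow> (nat \<Rightarrow> nat list) set" where
  "plane_trees n r = {ch. is_plane_tree n r ch}"

definition descendants :: "(nat \<Rightarrow> nat list) \<Rightarrow> nat \<Rightarrow> nat set" where
  "descendants ch i = {j. (i, j) \<in> (child_rel ch)\<^sup>*}"

definition beta :: "(nat \<Rightarrow> nat list) \<Rightarrow> nat \<Rightarrow> nat" where
  "beta ch i = Min (descendants ch i)"

definition eld_v :: "(nat \<Rightarrow> nat list) \<Rightarrow> nat \<Rightarrow> nat" where
  "eld_v ch v = card {k. k < length (ch v) \<and>
      (\<exists>l. k < l \<and> l < length (ch v) \<and> beta ch (ch v ! l) < beta ch (ch v ! k))}"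

definition deg_v :: "(nat \<Rightarrow> nat list) \<Rightarrow> nat \<Rightarrow> nat" where
  "deg_v ch v = length (ch v)"

definition young_v :: "(nat \<Rightarrow> nat list) \<Rightarrow> nat \<Rightarrow> nat" where
  "young_v ch v = deg_v ch v - eld_v ch v"

definition eld_total :: "nat \<Rightarrow> (nat \<Rightarrow> nat list) \<Rightarrow> nat" where
  "eld_total n ch = (\<Sum>v\<in>{1..n}. eld_v ch v)"

end

theory Submission
  imports Defs "HOL-Combinatorics.Multiset_Permutations"
begin

text \<open>Deleting a root \<open>r\<close> of a plane forest with root set \<open>R\<close> on the vertex set \<open>V\<close>
  leaves a plane forest on \<open>V - {r}\<close> whose roots are \<open>R - {r}\<close> together with the set \<open>C\<close>
  of children of \<open>r\<close>, and the children list of \<open>r\<close> is an arbitrary ordering of \<open>C\<close>.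
  The children of \<open>r\<close> head disjoint subtrees, so their \<open>\<beta>\<close>-values are distinct, and summing
  \<open>t ^ #elder * a ^ #young\<close> over all orderings of \<open>C\<close> gives \<open>a (a + t) \<cdots> (a + (|C| - 1) t)\<close>:
  the first entry is young exactly when its \<open>\<beta>\<close>-value is the smallest. By a Vandermonde
  convolution, the resulting recursion for the generating function of forests is also satisfied by
  \<open>(\<Sum>\<^sub>R x) (\<Sum>\<^sub>V x + t) \<cdots> (\<Sum>\<^sub>V x + (|V - R| - 1) t)\<close>. Hence the generating function of
  the trees on \<open>[n]\<close> with root \<open>r\<close> is \<open>x\<^sub>r\<close> times a polynomial that does not depend on \<open>r\<close>.\<close>

definition pochhammer_step :: "'a::comm_semiring_1 \<Rightarrow> 'a \<Rightarrow> nat \<Rightarrow> 'a" where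
  "pochhammer_step t a n = (\<Prod>j<n. a + of_nat j * t)"

lemma pochhammer_step_0 [simp]: "pochhammer_step t a 0 = 1"
  by (simp add: pochhammer_step_def)

lemma pochhammer_step_Suc: "pochhammer_step t a (Suc n) = pochhammer_step t a n * (a + of_nat n * t)"
  by (simp add: pochhammer_step_def)

lemma pochhammer_step_Suc_shift: "pochhammer_step t a (Suc n) = a * pochhammer_step t (a + t) n"
  unfolding pochhammer_step_def prod.lessThan_Suc_shift by (simp add: algebra_simps)

lemma sum_Pow_insert:
  assumes "finite M" "u \<notin> M"
  shows "(\<Sum>C\<in>Pow (insert u M). f C) = (\<Sum>C\<in>Pow M. f C) + (\<Sum>C\<in>Pow M. f (insert u C))"
proof -
  have "inj_on (insert u) (Pow M)" using assms(2) by (auto simp: inj_on_def)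
  then show ?thesis
    unfolding Pow_insert using assms by (subst sum.union_disjoint) (auto simp: sum.reindex)
qed

lemma pochhammer_step_vandermonde:
  fixes a b :: "'a::comm_semiring_1"
  assumes "finite M"
  shows "(\<Sum>C\<in>Pow M. pochhammer_step t a (card C) * pochhammer_step t b (card (M - C)))
       = pochhammer_step t (a + b) (card M)"
  using assms
proof (induction M rule: finite_induct)
  case (insert u M)
  let ?g = "\<lambda>C. pochhammer_step t a (card C) * pochhammer_step t b (card (M - C))"
  have split: "card C + card (M - C) = card M" if "C \<subseteq> M" for C
    using that insert.hyps(1) by (metis card_Diff_subset card_mono finite_subset le_add_diff_inverse)
  have without_u: "pochhammer_step t a (card C) * pochhammer_step t b (card (insert u M - C))
      = ?g C * (b + of_nat (card (M - C)) * t)" if "C \<subseteq> M" for C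
  proof -
    have "insert u M - C = insert u (M - C)" using that insert.hyps by auto
    then show ?thesis using insert.hyps by (simp add: pochhammer_step_Suc algebra_simps)
  qed
  have with_u: "pochhammer_step t a (card (insert u C)) * pochhammer_step t b (card (insert u M - insert u C))
      = ?g C * (a + of_nat (card C) * t)" if "C \<subseteq> M" for C
  proof -
    have "insert u M - insert u C = M - C" "u \<notin> C" using that insert.hyps by auto
    moreover have "finite C" using that insert.hyps(1) finite_subset by blast
    ultimately show ?thesis by (simp add: pochhammer_step_Suc algebra_simps)
  qed
  have "(\<Sum>C\<in>Pow (insert u M). pochhammer_step t a (card C) * pochhammer_step t b (card (insert u M - C)))
      = (\<Sum>C\<in>Pow M. pochhammer_step t a (card C) * pochhammer_step t b (card (insert u M - C)))
        + (\<Sum>C\<in>Pow M. pochhammer_step t a (card (insert u C))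
                       * pochhammer_step t b (card (insert u M - insert u C)))"
    using insert.hyps by (rule sum_Pow_insert)
  also have "\<dots> = (\<Sum>C\<in>Pow M. ?g C * (a + b + of_nat (card M) * t))"
    unfolding sum.distrib[symmetric]
  proof (rule sum.cong)
    fix C assume "C \<in> Pow M"
    then have C: "C \<subseteq> M" by simp
    have "of_nat (card M) = (of_nat (card C) + of_nat (card (M - C)) :: 'a)"
      using split[OF C] by (metis of_nat_add)
    then show "pochhammer_step t a (card C) * pochhammer_step t b (card (insert u M - C))
        + pochhammer_step t a (card (insert u C)) * pochhammer_step t b (card (insert u M - insert u C))
      = ?g C * (a + b + of_nat (card M) * t)"
      unfolding without_u[OF C] with_u[OF C] by (simp add: algebra_simps)
  qed simp
  also have "\<dots> = pochhammer_step t (a + b) (card (insert u M))"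
    using insert by (simp add: sum_distrib_right[symmetric] pochhammer_step_Suc)
  finally show ?case .
qed simp

lemma pochhammer_step_vandermonde_marked:
  fixes a b :: "'a::comm_semiring_1"
  assumes M: "finite M"
  shows "(\<Sum>C\<in>Pow M. pochhammer_step t a (card C)
            * (sum x (M - C) * pochhammer_step t b (card (M - C) - 1)))
       = sum x M * pochhammer_step t (a + b) (card M - 1)"
proof -
  have "pochhammer_step t a (card C) * (sum x (M - C) * pochhammer_step t b (card (M - C) - 1))
      = (\<Sum>u\<in>{u\<in>M. u \<notin> C}. x u * (pochhammer_step t a (card C)
                                     * pochhammer_step t b (card (M - {u} - C))))"
    if "C \<subseteq> M" for C
  proof -
    have "card (M - {u} - C) = card (M - C) - 1" if "u \<in> M - C" for u
      using that M by (metis Diff_insert2 card_Diff_singleton finite_Diff insert_Diff_single Diff_insert)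
    then show ?thesis
      by (simp add: set_diff_eq sum_distrib_left sum_distrib_right algebra_simps)
  qed
  then have "(\<Sum>C\<in>Pow M. pochhammer_step t a (card C)
                * (sum x (M - C) * pochhammer_step t b (card (M - C) - 1)))
      = (\<Sum>u\<in>M. \<Sum>C\<in>{C\<in>Pow M. u \<notin> C}.
           x u * (pochhammer_step t a (card C) * pochhammer_step t b (card (M - {u} - C))))"
    using M by (simp add: sum.swap_restrict[symmetric])
  also have "\<dots> = (\<Sum>u\<in>M. x u * pochhammer_step t (a + b) (card M - 1))"
  proof (rule sum.cong)
    fix u assume "u \<in> M"
    moreover have "{C\<in>Pow M. u \<notin> C} = Pow (M - {u})" by auto
    ultimately show "(\<Sum>C\<in>{C\<in>Pow M. u \<notin> C}.
        x u * (pochhammer_step t a (card C) * pochhammer_step t b (card (M - {u} - C))))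
      = x u * pochhammer_step t (a + b) (card M - 1)"
      using M by (simp add: sum_distrib_left[symmetric] pochhammer_step_vandermonde)
  qed simp
  finally show ?thesis by (simp add: sum_distrib_right)
qed

definition elder_count :: "('a \<Rightarrow> 'b::linorder) \<Rightarrow> 'a list \<Rightarrow> nat" where
  "elder_count \<beta> L = card {k. k < length L \<and>
      (\<exists>l. k < l \<and> l < length L \<and> \<beta> (L ! l) < \<beta> (L ! k))}"

lemma elder_count_Nil [simp]: "elder_count \<beta> [] = 0"
  by (simp add: elder_count_def)

lemma elder_count_le_length: "elder_count \<beta> L \<le> length L"
proof -
  have "elder_count \<beta> L \<le> card {..<length L}"
    unfolding elder_count_def by (rule card_mono) auto
  then show ?thesis by simp
qed

lemma elder_count_Cons:
  "elder_count \<beta> (y # L) = elder_count \<beta> L + (if \<exists>z\<in>set L. \<beta> z < \<beta> y then 1 else 0)"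
proof -
  let ?E = "\<lambda>L. {k. k < length L \<and> (\<exists>l. k < l \<and> l < length L \<and> \<beta> (L ! l) < \<beta> (L ! k))}"
  have tail: "Suc j \<in> ?E (y # L) \<longleftrightarrow> j \<in> ?E L" for j
    by (force simp: Suc_less_eq2)
  have head: "0 \<in> ?E (y # L) \<longleftrightarrow> (\<exists>z\<in>set L. \<beta> z < \<beta> y)"
    by (force simp: in_set_conv_nth gr0_conv_Suc)
  have "?E (y # L) = Suc ` ?E L \<union> (if \<exists>z\<in>set L. \<beta> z < \<beta> y then {0} else {})"
  proof (rule set_eqI)
    fix k show "k \<in> ?E (y # L) \<longleftrightarrow> k \<in> Suc ` ?E L \<union> (if \<exists>z\<in>set L. \<beta> z < \<beta> y then {0} else {})"
      using tail head by (cases k) auto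
  qed
  then show ?thesis
    unfolding elder_count_def by (simp add: card_image)
qed

definition list_weight :: "'c::comm_semiring_1 \<Rightarrow> 'c \<Rightarrow> ('a \<Rightarrow> 'b::linorder) \<Rightarrow> 'a list \<Rightarrow> 'c" where
  "list_weight t a \<beta> L = a ^ (length L - elder_count \<beta> L) * t ^ elder_count \<beta> L"

lemma list_weight_Nil [simp]: "list_weight t a \<beta> [] = 1"
  by (simp add: list_weight_def)

lemma list_weight_Cons:
  "list_weight t a \<beta> (y # L) = (if \<exists>z\<in>set L. \<beta> z < \<beta> y then t else a) * list_weight t a \<beta> L"
  using elder_count_le_length[of \<beta> L]
  by (simp add: list_weight_def elder_count_Cons Suc_diff_le algebra_simps)

lemma list_weight_cong:
  "(\<And>y. y \<in> set L \<Longrightarrow> \<beta>1 y = \<beta>2 y) \<Longrightarrow> list_weight t a \<beta>1 L = list_weight t a \<beta>2 L"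
  by (induction L) (simp_all add: list_weight_Cons)

lemma sum_if_exists_smaller:
  fixes \<beta> :: "'a \<Rightarrow> 'b::linorder"
  assumes "finite C" "inj_on \<beta> C" "C \<noteq> {}"
  shows "(\<Sum>y\<in>C. if \<exists>z\<in>C. \<beta> z < \<beta> y then t else a) = a + of_nat (card C - 1) * t"
proof -
  have "Min (\<beta> ` C) \<in> \<beta> ` C" using assms by (intro Min_in) auto
  then obtain m where m: "m \<in> C" "\<beta> m = Min (\<beta> ` C)" by auto
  have "\<beta> m < \<beta> y" if "y \<in> C - {m}" for y
    using that m assms by (metis DiffE Min_le finite_imageI image_eqI inj_on_eq_iff order_le_neq_trans singletonI)
  then have "(\<Sum>y\<in>C - {m}. if \<exists>z\<in>C. \<beta> z < \<beta> y then t else a) = (\<Sum>y\<in>C - {m}. t)"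
    using m(1) by (intro sum.cong) auto
  moreover have "\<not> (\<exists>z\<in>C. \<beta> z < \<beta> m)"
    using m assms(1) by (simp add: not_less)
  ultimately show ?thesis
    using m(1) assms(1) by (simp add: sum.remove)
qed

lemma sum_list_weight_permutations:
  assumes "finite C" "inj_on \<beta> C"
  shows "(\<Sum>L\<in>permutations_of_set C. list_weight t a \<beta> L) = pochhammer_step t a (card C)"
  using assms
proof (induction "card C" arbitrary: C)
  case (Suc n)
  then have "C \<noteq> {}" by auto
  have perms_tl: "(\<Sum>L\<in>permutations_of_set (C - {y}). list_weight t a \<beta> L) = pochhammer_step t a n"
    if "y \<in> C" for y
  proof -
    have "card (C - {y}) = n" using that Suc.hyps(2) Suc.prems(1) by simp
    then show ?thesis using Suc.hyps(1) Suc.prems by (simp add: inj_on_diff)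
  qed
  have "(\<Sum>L\<in>permutations_of_set C. list_weight t a \<beta> L)
      = (\<Sum>y\<in>C. \<Sum>L\<in>permutations_of_set (C - {y}). list_weight t a \<beta> (y # L))"
    unfolding permutations_of_set_nonempty[OF \<open>C \<noteq> {}\<close>] using Suc.prems(1)
    by (subst sum.UNION_disjoint) (auto simp: sum.reindex)
  also have "\<dots> = (\<Sum>y\<in>C. (if \<exists>z\<in>C. \<beta> z < \<beta> y then t else a) * pochhammer_step t a n)"
  proof (rule sum.cong)
    fix y assume "y \<in> C"
    let ?c = "if \<exists>z\<in>C. \<beta> z < \<beta> y then t else a"
    have "(\<Sum>L\<in>permutations_of_set (C - {y}). list_weight t a \<beta> (y # L))
        = (\<Sum>L\<in>permutations_of_set (C - {y}). ?c * list_weight t a \<beta> L)"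
      using \<open>y \<in> C\<close> by (intro sum.cong) (auto simp: list_weight_Cons permutations_of_set_def)
    then show "(\<Sum>L\<in>permutations_of_set (C - {y}). list_weight t a \<beta> (y # L)) = ?c * pochhammer_step t a n"
      by (simp only: sum_distrib_left[symmetric] perms_tl[OF \<open>y \<in> C\<close>])
  qed simp
  also have "\<dots> = pochhammer_step t a (card C)"
    using sum_if_exists_smaller[OF Suc.prems \<open>C \<noteq> {}\<close>, of t a]
    by (simp add: sum_distrib_left[symmetric] pochhammer_step_Suc mult.commute flip: Suc.hyps(2))
  finally show ?case .
qed simp

definition is_plane_forest :: "nat set \<Rightarrow> nat set \<Rightarrow> (nat \<Rightarrow> nat list) \<Rightarrow> bool" where
  "is_plane_forest V R ch \<longleftrightarrow> R \<subseteq> V \<and> (\<forall>v. v \<notin> V \<longrightarrow> ch v = []) \<and>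
     (\<forall>v. distinct (ch v) \<and> set (ch v) \<subseteq> V - R) \<and>
     (\<forall>c\<in>V - R. \<exists>!v. c \<in> set (ch v)) \<and>
     (\<forall>v\<in>V. \<exists>q\<in>R. (q, v) \<in> (child_rel ch)\<^sup>*)"

definition plane_forests :: "nat set \<Rightarrow> nat set \<Rightarrow> (nat \<Rightarrow> nat list) set" where
  "plane_forests V R = {ch. is_plane_forest V R ch}"

lemma child_rel_iff [simp]: "(v, c) \<in> child_rel ch \<longleftrightarrow> c \<in> set (ch v)"
  by (simp add: child_rel_def)

context
  fixes V R ch
  assumes forest: "is_plane_forest V R ch"
begin

lemma plane_forest_roots_subset: "R \<subseteq> V"
  using forest unfolding is_plane_forest_def by blast

lemma plane_forest_outside: "v \<notin> V \<Longrightarrow> ch v = []"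
  using forest unfolding is_plane_forest_def by blast

lemma plane_forest_distinct: "distinct (ch v)"
  using forest unfolding is_plane_forest_def by blast

lemma plane_forest_child: "c \<in> set (ch v) \<Longrightarrow> c \<in> V - R"
  using forest unfolding is_plane_forest_def by blast

lemma plane_forest_reachable_from_root: "v \<in> V \<Longrightarrow> \<exists>q\<in>R. (q, v) \<in> (child_rel ch)\<^sup>*"
  using forest unfolding is_plane_forest_def by blast

lemma plane_forest_parent_unique: "c \<in> set (ch v) \<Longrightarrow> c \<in> set (ch w) \<Longrightarrow> v = w"
  using forest plane_forest_child unfolding is_plane_forest_def by metis

lemma plane_forest_parent_exists: "c \<in> V - R \<Longrightarrow> \<exists>v. c \<in> set (ch v)"
  using forest unfolding is_plane_forest_def by blast

lemma plane_forest_reachable_mem: "(c, j) \<in> (child_rel ch)\<^sup>* \<Longrightarrow> c \<in> V \<Longrightarrow> j \<in> V"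
  by (induction rule: rtrancl_induct) (auto dest: plane_forest_child)

lemma plane_forest_root_unique:
  assumes "(a, j) \<in> (child_rel ch)\<^sup>*" "a \<in> R" "(b, j) \<in> (child_rel ch)\<^sup>*" "b \<in> R"
  shows "a = b"
  using assms(1,3,4)
proof (induction arbitrary: b rule: rtrancl_induct)
  case base
  then show ?case
    using assms(2) by (cases rule: rtranclE) (auto dest: plane_forest_child)
next
  case (step k j)
  from step.prems(1) show ?case
  proof (cases rule: rtranclE)
    case base
    then show ?thesis using step.hyps(2) step.prems(2) by (auto dest: plane_forest_child)
  next
    case (step k')
    then show ?thesis
      using step.hyps(2) step.IH step.prems(2) by (auto dest: plane_forest_parent_unique)
  qed
qed

lemma inj_on_beta_roots:
  assumes "finite V"
  shows "inj_on (beta ch) R"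
proof (rule inj_onI)
  have beta_descendant: "(a, beta ch a) \<in> (child_rel ch)\<^sup>*" if "a \<in> R" for a
  proof -
    have "descendants ch a \<subseteq> V"
      using that plane_forest_roots_subset plane_forest_reachable_mem
      unfolding descendants_def by blast
    then have "finite (descendants ch a)" using assms finite_subset by blast
    moreover have "a \<in> descendants ch a" by (simp add: descendants_def)
    ultimately have "beta ch a \<in> descendants ch a"
      unfolding beta_def by (intro Min_in) auto
    then show ?thesis by (simp add: descendants_def)
  qed
  fix a b assume "a \<in> R" "b \<in> R" "beta ch a = beta ch b"
  then show "a = b"
    using beta_descendant plane_forest_root_unique by metis
qed

end

lemma rtrancl_child_rel_fun_upd:
  assumes "\<forall>v. r \<notin> set (ch v)" "c \<noteq> r" "(c, j) \<in> (child_rel ch)\<^sup>*"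
  shows "(c, j) \<in> (child_rel (ch(r := L)))\<^sup>*"
proof -
  have "(c, j) \<in> (child_rel (ch(r := L)))\<^sup>* \<and> j \<noteq> r"
    using assms(3)
  proof (induction rule: rtrancl_induct)
    case (step k j)
    then show ?case
      using assms(1) by (auto intro: rtrancl_into_rtrancl)
  qed (use assms(2) in simp)
  then show ?thesis ..
qed

lemma beta_fun_upd:
  assumes "\<forall>v. r \<notin> set (ch v)" "r \<notin> set L" "c \<noteq> r"
  shows "beta (ch(r := L)) c = beta ch c"
proof -
  have "(c, j) \<in> (child_rel ch)\<^sup>*" if "(c, j) \<in> (child_rel (ch(r := L)))\<^sup>*" for j
    using rtrancl_child_rel_fun_upd[of r "ch(r := L)" c j "ch r"] that assms by simp
  then have "descendants (ch(r := L)) c = descendants ch c"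
    unfolding descendants_def using rtrancl_child_rel_fun_upd[OF assms(1,3)] by blast
  then show ?thesis by (simp add: beta_def)
qed

lemma plane_forest_remove_root:
  assumes forest: "is_plane_forest V R P" and r: "r \<in> R"
  shows "is_plane_forest (V - {r}) (R - {r} \<union> set (P r)) (P(r := []))"
proof -
  let ?P = "P(r := [])" and ?R = "R - {r} \<union> set (P r)"
  have roots: "?R \<subseteq> V - {r}"
    using plane_forest_roots_subset[OF forest] plane_forest_child[OF forest] r by blast
  have distinct: "distinct (?P v)" for v
    using plane_forest_distinct[OF forest] by simp
  have children: "set (?P v) \<subseteq> (V - {r}) - ?R" for v
  proof (cases "v = r")
    case False
    then show ?thesis
      using plane_forest_child[OF forest] plane_forest_parent_unique[OF forest] r by fastforce
  qed simp
  have parent: "\<exists>!v. c \<in> set (?P v)" if c: "c \<in> (V - {r}) - ?R" for c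
  proof -
    obtain v where v: "c \<in> set (P v)"
      using c plane_forest_parent_exists[OF forest] by blast
    then have "v \<noteq> r" using c by blast
    show ?thesis
    proof (rule ex1I[of _ v])
      show "c \<in> set (?P v)" using v \<open>v \<noteq> r\<close> by simp
      fix w assume "c \<in> set (?P w)"
      then have "c \<in> set (P w)" by (simp split: if_splits)
      then show "w = v" using plane_forest_parent_unique[OF forest] v by blast
    qed
  qed
  have reach: "j = r \<or> (\<exists>q\<in>?R. (q, j) \<in> (child_rel ?P)\<^sup>*)"
    if "(q, j) \<in> (child_rel P)\<^sup>*" "q \<in> R" for q j
    using that(1)
  proof (induction rule: rtrancl_induct)
    case (step k j)
    show ?case
    proof (cases "k = r")
      case False
      with step.IH obtain q where "q \<in> ?R" "(q, k) \<in> (child_rel ?P)\<^sup>*" by blast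
      moreover have "(k, j) \<in> child_rel ?P" using step.hyps(2) False by simp
      ultimately show ?thesis by (meson rtrancl_into_rtrancl)
    qed (use step.hyps(2) in auto)
  qed (use that(2) in auto)
  have reachable: "\<exists>q\<in>?R. (q, v) \<in> (child_rel ?P)\<^sup>*" if v: "v \<in> V - {r}" for v
  proof -
    obtain q where "q \<in> R" "(q, v) \<in> (child_rel P)\<^sup>*"
      using v plane_forest_reachable_from_root[OF forest] by blast
    then show ?thesis using reach v by blast
  qed
  have outside: "?P v = []" if "v \<notin> V - {r}" for v
    using that plane_forest_outside[OF forest, of v] by (cases "v \<in> V") simp_all
  show ?thesis
    unfolding is_plane_forest_def
    by (intro conjI allI ballI impI roots outside distinct children parent reachable)
qed

lemma plane_forest_attach_root:
  assumes forest: "is_plane_forest (V - {r}) (R - {r} \<union> C) P"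
    and r: "r \<in> R" and "R \<subseteq> V" and C: "C \<subseteq> V - R" and L: "distinct L" "set L = C"
  shows "is_plane_forest V R (P(r := L))"
proof -
  let ?P = "P(r := L)"
  have Pr: "P r = []" using plane_forest_outside[OF forest] by simp
  have old_child: "c \<in> V - R - C" if "c \<in> set (P v)" for c v
    using plane_forest_child[OF forest that] by blast
  have distinct: "distinct (?P v)" for v
    using L plane_forest_distinct[OF forest] by simp
  have children: "set (?P v) \<subseteq> V - R" for v
    using C L old_child by (cases "v = r") auto
  have parent: "\<exists>!v. c \<in> set (?P v)" if c: "c \<in> V - R" for c
  proof (cases "c \<in> C")
    case True
    show ?thesis
    proof (rule ex1I[of _ r])
      show "c \<in> set (?P r)" using True L by simp
      fix w assume "c \<in> set (?P w)"
      then show "w = r" using True old_child by (cases "w = r") auto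
    qed
  next
    case False
    then obtain v where v: "c \<in> set (P v)"
      using c r plane_forest_parent_exists[OF forest] by blast
    then have "v \<noteq> r" using Pr by auto
    show ?thesis
    proof (rule ex1I[of _ v])
      show "c \<in> set (?P v)" using v \<open>v \<noteq> r\<close> by simp
      fix w assume "c \<in> set (?P w)"
      then have "c \<in> set (P w)" using False L by (cases "w = r") auto
      then show "w = v" using plane_forest_parent_unique[OF forest] v by blast
    qed
  qed
  have "child_rel P \<subseteq> child_rel ?P" using Pr by (auto simp: child_rel_def)
  then have lift: "(child_rel P)\<^sup>* \<subseteq> (child_rel ?P)\<^sup>*" by (rule rtrancl_mono)
  have reachable: "\<exists>q\<in>R. (q, v) \<in> (child_rel ?P)\<^sup>*" if v: "v \<in> V" for v
  proof (cases "v = r")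
    case False
    then obtain q where q: "q \<in> R - {r} \<union> C" "(q, v) \<in> (child_rel ?P)\<^sup>*"
      using v plane_forest_reachable_from_root[OF forest] lift by blast
    show ?thesis
    proof (cases "q \<in> C")
      case True
      then have "(r, q) \<in> child_rel ?P" using L by simp
      then show ?thesis using q(2) r by (meson converse_rtrancl_into_rtrancl)
    next
      case False
      then show ?thesis using q by blast
    qed
  qed (use r in auto)
  have outside: "?P v = []" if "v \<notin> V" for v
    using that r \<open>R \<subseteq> V\<close> plane_forest_outside[OF forest, of v] by auto
  show ?thesis
    unfolding is_plane_forest_def
    by (intro conjI allI ballI impI \<open>R \<subseteq> V\<close> outside distinct children parent reachable)
qed

lemma finite_plane_forests:
  assumes "finite V"
  shows "finite (plane_forests V R)"
proof -
  let ?Lists = "{xs. set xs \<subseteq> V \<and> length xs \<le> card V}"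
  let ?Funs = "{ch. \<forall>v. (v \<in> V \<longrightarrow> ch v \<in> ?Lists) \<and> (v \<notin> V \<longrightarrow> ch v = [])}"
  have "ch \<in> ?Funs" if forest: "is_plane_forest V R ch" for ch
  proof -
    have "ch v \<in> ?Lists" for v
    proof -
      have sub: "set (ch v) \<subseteq> V" using plane_forest_child[OF forest] by blast
      have "length (ch v) = card (set (ch v))"
        using distinct_card[OF plane_forest_distinct[OF forest]] by simp
      also have "\<dots> \<le> card V" using card_mono[OF assms sub] .
      finally show ?thesis using sub by simp
    qed
    then show ?thesis using plane_forest_outside[OF forest] by simp
  qed
  then have "plane_forests V R \<subseteq> ?Funs" unfolding plane_forests_def by blast
  moreover have "finite ?Funs"
    using finite_set_of_finite_funs[OF assms finite_lists_length_le[OF assms]] .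
  ultimately show ?thesis by (rule finite_subset)
qed

lemma plane_forests_remove_root_bij:
  assumes r: "r \<in> R" and "R \<subseteq> V"
  shows "bij_betw (\<lambda>(C, P, L). P(r := L))
           (SIGMA C:Pow (V - R). plane_forests (V - {r}) (R - {r} \<union> C) \<times> permutations_of_set C)
           (plane_forests V R)"
    (is "bij_betw ?attach ?D _")
proof (rule bij_betw_byWitness[where f' = "\<lambda>ch. (set (ch r), ch(r := []), ch r)"])
  have D_iff: "(C, P, L) \<in> ?D \<longleftrightarrow>
      C \<subseteq> V - R \<and> is_plane_forest (V - {r}) (R - {r} \<union> C) P \<and> distinct L \<and> set L = C"
    for C P L by (simp add: plane_forests_def permutations_of_set_def conj_commute)
  show "\<forall>p\<in>?D. (\<lambda>ch. (set (ch r), ch(r := []), ch r)) (?attach p) = p"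
  proof
    fix p assume "p \<in> ?D"
    obtain C P L where p: "p = (C, P, L)" by (cases p)
    have "is_plane_forest (V - {r}) (R - {r} \<union> C) P" "set L = C"
      using \<open>p \<in> ?D\<close> unfolding p D_iff by simp_all
    moreover have "P r = []" using plane_forest_outside[OF calculation(1)] by simp
    ultimately show "(\<lambda>ch. (set (ch r), ch(r := []), ch r)) (?attach p) = p"
      using p by (simp add: fun_upd_idem)
  qed
  show "\<forall>ch\<in>plane_forests V R. ?attach (set (ch r), ch(r := []), ch r) = ch"
    by simp
  show "?attach ` ?D \<subseteq> plane_forests V R"
  proof (rule image_subsetI)
    fix p assume "p \<in> ?D"
    obtain C P L where p: "p = (C, P, L)" by (cases p)
    have "is_plane_forest V R (P(r := L))"
      using \<open>p \<in> ?D\<close> plane_forest_attach_root[OF _ r \<open>R \<subseteq> V\<close>] unfolding p D_iff by blast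
    with p show "?attach p \<in> plane_forests V R" by (simp add: plane_forests_def)
  qed
  show "(\<lambda>ch. (set (ch r), ch(r := []), ch r)) ` plane_forests V R \<subseteq> ?D"
  proof (rule image_subsetI)
    fix ch assume "ch \<in> plane_forests V R"
    then have forest: "is_plane_forest V R ch" by (simp add: plane_forests_def)
    have "set (ch r) \<subseteq> V - R" using plane_forest_child[OF forest] by blast
    then show "(set (ch r), ch(r := []), ch r) \<in> ?D"
      unfolding D_iff using plane_forest_remove_root[OF forest r] plane_forest_distinct[OF forest]
      by simp
  qed
qed

definition forest_weight :: "(nat \<Rightarrow> 'a::comm_semiring_1) \<Rightarrow> 'a \<Rightarrow> nat set \<Rightarrow> (nat \<Rightarrow> nat list) \<Rightarrow> 'a" where
  "forest_weight x t V ch = (\<Prod>v\<in>V. list_weight t (x v) (beta ch) (ch v))"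

definition forest_gf :: "(nat \<Rightarrow> 'a::comm_semiring_1) \<Rightarrow> 'a \<Rightarrow> nat set \<Rightarrow> nat set \<Rightarrow> 'a" where
  "forest_gf x t V R = (\<Sum>ch\<in>plane_forests V R. forest_weight x t V ch)"

lemma forest_weight_attach_root:
  assumes forest: "is_plane_forest (V - {r}) R' P" and "finite V" "r \<in> V" "r \<notin> set L"
  shows "forest_weight x t V (P(r := L)) = list_weight t (x r) (beta P) L * forest_weight x t (V - {r}) P"
proof -
  have orphan: "\<forall>v. r \<notin> set (P v)" using plane_forest_child[OF forest] by blast
  have "list_weight t a (beta (P(r := L))) ((P(r := L)) v) = list_weight t a (beta P) ((P(r := L)) v)"
    for a v
  proof (rule list_weight_cong)
    fix c assume "c \<in> set ((P(r := L)) v)"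
    then have "c \<noteq> r" using orphan \<open>r \<notin> set L\<close> by (auto split: if_splits)
    then show "beta (P(r := L)) c = beta P c" using beta_fun_upd[OF orphan \<open>r \<notin> set L\<close>] by simp
  qed
  then have "forest_weight x t V (P(r := L)) = (\<Prod>v\<in>V. list_weight t (x v) (beta P) ((P(r := L)) v))"
    by (simp add: forest_weight_def)
  also have "\<dots> = list_weight t (x r) (beta P) L * (\<Prod>v\<in>V - {r}. list_weight t (x v) (beta P) (P v))"
    using assms(2,3) by (simp add: prod.remove)
  finally show ?thesis by (simp add: forest_weight_def)
qed

lemma forest_gf_remove_root:
  assumes "finite V" "r \<in> R" "R \<subseteq> V"
  shows "forest_gf x t V R = (\<Sum>C\<in>Pow (V - R).
           pochhammer_step t (x r) (card C) * forest_gf x t (V - {r}) (R - {r} \<union> C))"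
proof -
  let ?F = "\<lambda>C. plane_forests (V - {r}) (R - {r} \<union> C)"
  have weight: "forest_weight x t V (P(r := L)) = list_weight t (x r) (beta P) L * forest_weight x t (V - {r}) P"
    if "C \<subseteq> V - R" "P \<in> ?F C" "L \<in> permutations_of_set C" for C P L
    using that assms forest_weight_attach_root[of V r "R - {r} \<union> C" P L]
    by (auto simp: plane_forests_def permutations_of_set_def)
  have perms: "(\<Sum>L\<in>permutations_of_set C. list_weight t (x r) (beta P) L) = pochhammer_step t (x r) (card C)"
    if "C \<subseteq> V - R" "P \<in> ?F C" for C P
  proof (rule sum_list_weight_permutations)
    show "finite C" using that(1) assms(1) finite_subset by blast
    have "inj_on (beta P) (R - {r} \<union> C)"
      using that(2) assms(1) inj_on_beta_roots by (simp add: plane_forests_def)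
    then show "inj_on (beta P) C" by (rule inj_on_subset) blast
  qed
  have "forest_gf x t V R = (\<Sum>(C, P, L)\<in>(SIGMA C:Pow (V - R). ?F C \<times> permutations_of_set C).
                               forest_weight x t V (P(r := L)))"
    unfolding forest_gf_def
    using sum.reindex_bij_betw[OF plane_forests_remove_root_bij[OF assms(2,3)], of "forest_weight x t V"]
    by (simp add: case_prod_unfold)
  also have "\<dots> = (\<Sum>C\<in>Pow (V - R). \<Sum>P\<in>?F C. \<Sum>L\<in>permutations_of_set C.
                      list_weight t (x r) (beta P) L * forest_weight x t (V - {r}) P)"
    using assms(1) finite_plane_forests[of "V - {r}"]
    by (simp add: sum.Sigma[symmetric] sum.cartesian_product[symmetric] weight)
  also have "\<dots> = (\<Sum>C\<in>Pow (V - R). \<Sum>P\<in>?F C. pochhammer_step t (x r) (card C) * forest_weight x t (V - {r}) P)"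
    by (intro sum.cong refl) (simp add: sum_distrib_right[symmetric] perms)
  finally show ?thesis by (simp add: forest_gf_def sum_distrib_left)
qed

text \<open>This is \<open>1\<close> if \<open>V \<subseteq> R\<close> and \<open>(\<Sum>\<^sub>R x) * pochhammer_step t (\<Sum>\<^sub>V x + t) (|V - R| - 1)\<close>
  otherwise; the difference form needs no case split.\<close>

definition forest_formula :: "(nat \<Rightarrow> 'a::comm_ring_1) \<Rightarrow> 'a \<Rightarrow> nat set \<Rightarrow> nat set \<Rightarrow> 'a" where
  "forest_formula x t V R = pochhammer_step t (sum x V) (card (V - R))
     - sum x (V - R) * pochhammer_step t (sum x V + t) (card (V - R) - 1)"

lemma forest_formula_remove_root:
  assumes "finite V" "r \<in> R" "R \<subseteq> V"
  shows "(\<Sum>C\<in>Pow (V - R). pochhammer_step t (x r) (card C) * forest_formula x t (V - {r}) (R - {r} \<union> C))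
       = forest_formula x t V R"
proof -
  define M where "M = V - R"
  define Q where "Q = sum x (V - {r})"
  have "finite M" using assms(1) by (simp add: M_def)
  have "V - {r} - (R - {r} \<union> C) = M - C" for C
    using assms by (auto simp: M_def)
  then have "(\<Sum>C\<in>Pow M. pochhammer_step t (x r) (card C) * forest_formula x t (V - {r}) (R - {r} \<union> C))
      = (\<Sum>C\<in>Pow M. pochhammer_step t (x r) (card C) * pochhammer_step t Q (card (M - C)))
        - (\<Sum>C\<in>Pow M. pochhammer_step t (x r) (card C)
             * (sum x (M - C) * pochhammer_step t (Q + t) (card (M - C) - 1)))"
    by (simp add: forest_formula_def Q_def sum_subtractf[symmetric] right_diff_distrib)
  also have "\<dots> = pochhammer_step t (x r + Q) (card M) - sum x M * pochhammer_step t (x r + Q + t) (card M - 1)"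
    using pochhammer_step_vandermonde[OF \<open>finite M\<close>, where a = "x r" and b = Q]
      pochhammer_step_vandermonde_marked[OF \<open>finite M\<close>, where a = "x r" and b = "Q + t"]
    by (simp add: add.assoc)
  also have "x r + Q = sum x V"
    using assms sum.remove[of V r x] by (auto simp: Q_def)
  finally show ?thesis by (simp add: forest_formula_def M_def)
qed

lemma forest_gf_no_roots:
  assumes "finite V"
  shows "forest_gf x t V {} = forest_formula x t V {}"
proof (cases "V = {}")
  case True
  then have "plane_forests V {} = {\<lambda>_. []}"
    by (auto simp: plane_forests_def is_plane_forest_def)
  then show ?thesis using True by (simp add: forest_gf_def forest_weight_def forest_formula_def)
next
  case False
  then have "plane_forests V {} = {}"
    by (auto simp: plane_forests_def is_plane_forest_def)
  moreover obtain k where "card V = Suc k"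
    using False assms by (metis card_0_eq not0_implies_Suc)
  ultimately show ?thesis
    by (simp add: forest_gf_def forest_formula_def pochhammer_step_Suc_shift)
qed

theorem forest_gf_eq_formula:
  assumes "finite V" "R \<subseteq> V"
  shows "forest_gf x t V R = forest_formula x t V R"
  using assms
proof (induction "card V" arbitrary: V R rule: less_induct)
  case less
  show ?case
  proof (cases "R = {}")
    case True
    then show ?thesis using forest_gf_no_roots[OF less.prems(1)] by simp
  next
    case False
    then obtain r where r: "r \<in> R" by blast
    have IH: "forest_gf x t (V - {r}) (R - {r} \<union> C) = forest_formula x t (V - {r}) (R - {r} \<union> C)"
      if "C \<in> Pow (V - R)" for C
    proof (rule less.hyps)
      show "card (V - {r}) < card V"
        using less.prems r by (meson card_Diff1_less subsetD)
    qed (use that r less.prems in auto)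
    have "forest_gf x t V R = (\<Sum>C\<in>Pow (V - R).
            pochhammer_step t (x r) (card C) * forest_gf x t (V - {r}) (R - {r} \<union> C))"
      using forest_gf_remove_root[OF less.prems(1) r less.prems(2)] .
    also have "\<dots> = (\<Sum>C\<in>Pow (V - R).
            pochhammer_step t (x r) (card C) * forest_formula x t (V - {r}) (R - {r} \<union> C))"
      using IH by (intro sum.cong) simp_all
    also have "\<dots> = forest_formula x t V R"
      using forest_formula_remove_root[OF less.prems(1) r less.prems(2)] .
    finally show ?thesis .
  qed
qed

lemma plane_trees_eq_plane_forests: "plane_trees n r = plane_forests {1..n} {r}"
  unfolding plane_trees_def plane_forests_def is_plane_tree_def is_plane_forest_def by auto

lemma plane_tree_weight_eq_forest_weight:
  "t ^ eld_total n T * (\<Prod>i=1..n. x i ^ young_v T i) = forest_weight x t {1..n} T"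
proof -
  have "t ^ eld_total n T = (\<Prod>i=1..n. t ^ eld_v T i)"
    unfolding eld_total_def by (rule power_sum)
  then show ?thesis
    by (simp add: forest_weight_def list_weight_def young_v_def deg_v_def eld_v_def elder_count_def
                  prod.distrib mult.commute)
qed

lemma plane_trees_gf:
  fixes x :: "nat \<Rightarrow> 'a::comm_ring_1"
  assumes "r \<in> {1..n}" "2 \<le> n"
  shows "(\<Sum>T\<in>plane_trees n r. t ^ eld_total n T * (\<Prod>i=1..n. x i ^ young_v T i))
       = x r * pochhammer_step t (sum x {1..n} + t) (n - 2)"
proof -
  have "(\<Sum>T\<in>plane_trees n r. t ^ eld_total n T * (\<Prod>i=1..n. x i ^ young_v T i))
      = forest_gf x t {1..n} {r}"
    unfolding forest_gf_def plane_trees_eq_plane_forests plane_tree_weight_eq_forest_weight ..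
  also have "\<dots> = forest_formula x t {1..n} {r}"
    using assms(1) by (intro forest_gf_eq_formula) auto
  also have "\<dots> = x r * pochhammer_step t (sum x {1..n} + t) (n - 2)"
  proof -
    have "card ({1..n} - {r}) = Suc (n - 2)" using assms by simp
    moreover have "sum x {1..n} = x r + sum x ({1..n} - {r})"
      using assms(1) by (simp add: sum.remove)
    ultimately show ?thesis
      by (simp add: forest_formula_def pochhammer_step_Suc_shift algebra_simps)
  qed
  finally show ?thesis .
qed

theorem corollary4p7:
  fixes x :: "nat \<Rightarrow> 'a::field" and t :: 'a and n r s :: nat
  assumes "1 \<le> r" and "r < s" and "s \<le> n"
    and "x r \<noteq> 0" and "x s \<noteq> 0"
  shows "inverse (x r) * (\<Sum>T\<in>plane_trees n r.
            t ^ eld_total n T * (\<Prod>i=1..n. x i ^ young_v T i))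
       = inverse (x s) * (\<Sum>T\<in>plane_trees n s.
            t ^ eld_total n T * (\<Prod>i=1..n. x i ^ young_v T i))"
  using assms plane_trees_gf[where x = x and t = t and n = n] by simp

end
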